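(* Let $d\ge1$, $\nu>0$, $\mu>0$, and let $\mathbf{T}_1,\mathbf{T}_2$ be independent random vectors in $\mathbb{R}^d$ with Student densities $f_\nu$ and $f_\mu$ respectively, where $f_\nu(\mathbf{t})=\frac{\Gamma(\nu+\frac d2)}{\Gamma(\nu)\pi^{d/2}}(1+\Vert\mathbf{t}\Vert^2)^{-\nu-\frac d2}$. Then the density of $\mathbf{Y}=\mathbf{T}_1+\mathbf{T}_2$ is \[ f_{\mathbf{Y}}(\mathbf{x})=\sum_{n=0}^\infty c_n^{(\nu,\mu)}\phi_{n,\nu+\mu}(\mathbf{x}),\qquad\mathbf{x}\in\mathbb{R}^d, \] where \[ c_n^{(\nu,\mu)}=\frac{1}{B(\nu,\mu)}\frac{(\frac d2)_n}{n!}\int_0^1 t^{\mu+\frac d2-1}(1-t)^{\nu+\frac d2-1}(1-t+t^2)^n\,dt,\qquad n\ge0, \] are positive coefficients with $\sum_n c_n^{(\nu,\mu)}=1$.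
   Context: For $\eta>0$ and $n\in\mathbb{N}$, $\phi_{n,\eta}$ is the probability density on $\mathbb{R}^d$ \[ \phi_{n,\eta}(\mathbf{x})=\frac{\Gamma(\frac d2)}{\pi^{d/2}B(\eta,n+\frac d2)}\frac{\Vert\mathbf{x}\Vert^{2n}}{(1+\Vert\mathbf{x}\Vert^2)^{\eta+n+\frac d2}}. \] $B$ is the Beta function and $(a)_n=a(a+1)\cdots(a+n-1)$ is the Pochhammer symbol. $f_\nu$ is the Student density with $2\nu$ degrees of freedom. *)

theory Defs
  imports "HOL-Probability.Probability"
begin

definition student_density :: "real \<Rightarrow> 'a::euclidean_space \<Rightarrow> real" where
  "student_density \<nu> t =
     Gamma (\<nu> + real DIM('a) / 2) / (Gamma \<nu> * pi powr (real DIM('a) / 2))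
     * (1 + (norm t)\<^sup>2) powr (- \<nu> - real DIM('a) / 2)"

definition phi_density :: "nat \<Rightarrow> real \<Rightarrow> 'a::euclidean_space \<Rightarrow> real" where
  "phi_density n \<eta> x =
     Gamma (real DIM('a) / 2) / (pi powr (real DIM('a) / 2) * Beta \<eta> (real n + real DIM('a) / 2))
     * (norm x) ^ (2 * n) / (1 + (norm x)\<^sup>2) powr (\<eta> + real n + real DIM('a) / 2)"

definition c_coeff :: "real \<Rightarrow> real \<Rightarrow> nat \<Rightarrow> nat \<Rightarrow> real" where
  "c_coeff \<nu> \<mu> d n =
     1 / Beta \<nu> \<mu> * pochhammer (real d / 2) n / fact n
     * integral {0..1} (\<lambda>t::real. t powr (\<mu> + real d / 2 - 1) * (1 - t) powr (\<nu> + real d / 2 - 1)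
                                   * (1 - t + t\<^sup>2) ^ n)"

end

theory Submission
  imports Defs
begin

text \<open>
  The Student density is a Gamma mixture of Gaussians:
  (1 + |z|^2)^(-a) = Gamma(a)^(-1) * int_0^oo s^(a-1) exp(-(1 + |z|^2) s) ds.
  Inserting this for both factors of the convolution of f_nu and f_mu, the integral over y
  becomes Gaussian; the substitution s = r t, u = r (1 - t) followed by the Gamma integral
  in r leaves, with D = d/2, A = nu + mu + D and X = |x|^2,
  f_Y(x) = Gamma(A) / (Gamma(nu) Gamma(mu) pi^D) * int_0^1 t^(mu+D-1) (1-t)^(nu+D-1) (1 + t(1-t) X)^(-A) dt.
  Since 1 + t(1-t) X = (1 + X)(1 - q) with q = X (1 - t + t^2) / (1 + X) in [0, 1), the
  binomial series of (1 - q)^(-A) has nonnegative terms and may be integrated termwise;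
  its n-th term integrates to c_n phi_{n,nu+mu}(x). The same expansion applied to
  (1 - (1 - t + t^2))^(-D) = (t (1 - t))^(-D) turns the Beta weight of the coefficients
  into that of B(mu, nu), whence the c_n sum to 1.
\<close>

section \<open>Gaussian, Gamma and Beta integrals\<close>

lemma nn_integral_exp_neg_square:
  fixes c m :: real assumes c: "c > 0"
  shows "(\<integral>\<^sup>+t. ennreal (exp (- c * (t - m)\<^sup>2)) \<partial>lborel) = ennreal (sqrt (pi / c))"
proof -
  define \<sigma> where "\<sigma> = sqrt (1 / (2 * c))"
  have \<sigma>2: "\<sigma>\<^sup>2 = 1 / (2 * c)" using c by (simp add: \<sigma>_def)
  have \<sigma>: "\<sigma> > 0" "2 * pi * \<sigma>\<^sup>2 = pi / c" "- (t - m)\<^sup>2 / (2 * \<sigma>\<^sup>2) = - c * (t - m)\<^sup>2" for t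
    using c unfolding \<sigma>2 by (simp_all add: \<sigma>_def)
  have "exp (- c * (t - m)\<^sup>2) = sqrt (pi / c) * normal_density m \<sigma> t" for t
    using c unfolding normal_density_def \<sigma>(2,3) by simp
  then have "(\<integral>\<^sup>+t. ennreal (exp (- c * (t - m)\<^sup>2)) \<partial>lborel)
      = ennreal (sqrt (pi / c)) * (\<integral>\<^sup>+t. ennreal (normal_density m \<sigma> t) \<partial>lborel)"
    using c by (simp add: ennreal_mult nn_integral_cmult)
  also have "(\<integral>\<^sup>+t. ennreal (normal_density m \<sigma> t) \<partial>lborel) = 1"
    using prob_space.emeasure_space_1[OF prob_space_normal_density[OF \<sigma>(1)]]
    by (simp add: emeasure_density)
  finally show ?thesis by simp
qed

lemma nn_integral_exp_neg_norm_square: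
  fixes c :: real and z :: "'a::euclidean_space" assumes c: "c > 0"
  shows "(\<integral>\<^sup>+y. ennreal (exp (- c * (norm (y - z))\<^sup>2)) \<partial>(lborel::'a measure))
       = ennreal ((pi / c) powr (real DIM('a) / 2))"
proof -
  have "ennreal (exp (- c * (norm (y - z))\<^sup>2)) = (\<Prod>b\<in>Basis. ennreal (exp (- c * (y \<bullet> b - z \<bullet> b)\<^sup>2)))"
    for y :: 'a
    by (simp add: prod_ennreal exp_sum[symmetric] sum_distrib_left euclidean_dist_l2[of y z, unfolded dist_norm]
                  L2_set_def inner_diff_left sum_nonneg)
  then have "(\<integral>\<^sup>+y. ennreal (exp (- c * (norm (y - z))\<^sup>2)) \<partial>(lborel::'a measure))
      = (\<integral>\<^sup>+y. (\<Prod>b\<in>Basis. ennreal (exp (- c * (y \<bullet> b - z \<bullet> b)\<^sup>2))) \<partial>(lborel::'a measure))"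
    by simp
  also have "\<dots> = (\<Prod>b\<in>(Basis::'a set). \<integral>\<^sup>+t. ennreal (exp (- c * (t - z \<bullet> b)\<^sup>2)) \<partial>lborel)"
    by (rule nn_integral_lborel_prod) auto
  also have "\<dots> = (\<Prod>b\<in>(Basis::'a set). ennreal (sqrt (pi / c)))"
    by (simp only: nn_integral_exp_neg_square[OF c])
  also have "\<dots> = ennreal (sqrt (pi / c) ^ DIM('a))"
    using c by (simp add: ennreal_power)
  also have "sqrt (pi / c) ^ DIM('a) = (pi / c) powr (real DIM('a) / 2)"
    using c by (simp add: sqrt_def root_powr_inverse powr_realpow[symmetric] powr_powr)
  finally show ?thesis .
qed

lemma norm_square_completion:
  fixes x y :: "'a::real_inner" and s u :: real
  assumes "s + u \<noteq> 0"
  shows "s * (norm y)\<^sup>2 + u * (norm (x - y))\<^sup>2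
       = s * u / (s + u) * (norm x)\<^sup>2 + (s + u) * (norm (y - (u / (s + u)) *\<^sub>R x))\<^sup>2"
  unfolding power2_norm_eq_inner using assms
  by (simp add: inner_diff_left inner_diff_right inner_commute divide_simps power2_eq_square)
     algebra

lemma nn_integral_exp_neg_norm_squares:
  fixes x :: "'a::euclidean_space" and s u :: real assumes su: "s + u > 0"
  shows "(\<integral>\<^sup>+y. ennreal (exp (- (s * (norm y)\<^sup>2 + u * (norm (x - y))\<^sup>2))) \<partial>lborel)
       = ennreal (exp (- (s * u / (s + u) * (norm x)\<^sup>2)) * (pi / (s + u)) powr (real DIM('a) / 2))"
proof -
  define z where "z = (u / (s + u)) *\<^sub>R x"
  have "exp (- (s * (norm y)\<^sup>2 + u * (norm (x - y))\<^sup>2))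
      = exp (- (s * u / (s + u) * (norm x)\<^sup>2)) * exp (- (s + u) * (norm (y - z))\<^sup>2)" for y :: 'a
    using norm_square_completion[of s u y x] su unfolding z_def
    by (simp add: exp_add[symmetric] algebra_simps)
  then have "(\<integral>\<^sup>+y. ennreal (exp (- (s * (norm y)\<^sup>2 + u * (norm (x - y))\<^sup>2))) \<partial>lborel)
      = ennreal (exp (- (s * u / (s + u) * (norm x)\<^sup>2)))
        * (\<integral>\<^sup>+y. ennreal (exp (- (s + u) * (norm (y - z))\<^sup>2)) \<partial>(lborel::'a measure))"
    by (simp add: ennreal_mult nn_integral_cmult)
  also have "\<dots> = ennreal (exp (- (s * u / (s + u) * (norm x)\<^sup>2)) * (pi / (s + u)) powr (real DIM('a) / 2))"
    using nn_integral_exp_neg_norm_square[OF su, of z] by (simp add: ennreal_mult)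
  finally show ?thesis .
qed

lemma nn_integral_Gamma_kernel:
  fixes p c :: real assumes p: "p > 0" and c: "c > 0"
  shows "(\<integral>\<^sup>+r. ennreal (indicator {0<..} r * r powr (p - 1) * exp (- (c * r))) \<partial>lborel)
       = ennreal (Gamma p / c powr p)"
proof -
  define G where "G t = ennreal (indicator {0..} t * t powr (p - 1) / exp t)" for t :: real
  have "ennreal (indicator {0<..} r * r powr (p - 1) * exp (- (c * r)))
      = ennreal (c powr (1 - p)) * G (c * r)" for r
    using c by (cases "r > 0") (auto simp: G_def ennreal_mult'[symmetric] powr_mult exp_minus powr_diff
                field_simps zero_le_mult_iff indicator_def)
  then have "(\<integral>\<^sup>+r. ennreal (indicator {0<..} r * r powr (p - 1) * exp (- (c * r))) \<partial>lborel)
      = ennreal (c powr (1 - p)) * (\<integral>\<^sup>+r. G (c * r) \<partial>lborel)"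
    by (simp add: nn_integral_cmult G_def)
  also have "(\<integral>\<^sup>+r. G (c * r) \<partial>lborel) = ennreal (1 / c) * (\<integral>\<^sup>+t. G t \<partial>lborel)"
    using nn_integral_real_affine[of "\<lambda>r. G (c * r)" "1 / c" 0] c by (simp add: G_def)
  also have "(\<integral>\<^sup>+t. G t \<partial>lborel) = ennreal (Gamma p)"
    using Gamma_conv_nn_integral_real[OF p] by (simp add: G_def)
  also have "ennreal (c powr (1 - p)) * (ennreal (1 / c) * ennreal (Gamma p)) = ennreal (Gamma p / c powr p)"
    using c p by (simp add: ennreal_mult'[symmetric] Gamma_real_pos less_imp_le powr_diff)
  finally show ?thesis .
qed

lemma Beta_real_pos:
  fixes a b :: real assumes "a > 0" "b > 0"
  shows "Beta a b > 0"
  using assms by (simp add: Beta_def Gamma_real_pos)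

lemma integrable_Beta_kernel_mult_continuous:
  fixes p q :: real and g :: "real \<Rightarrow> real"
  assumes "p > 0" "q > 0" and g: "continuous_on {0..1} g"
  shows "(\<lambda>t. t powr (p - 1) * (1 - t) powr (q - 1) * g t) integrable_on {0..1}"
proof -
  have "(\<lambda>t. t powr (p - 1) * (1 - t) powr (q - 1)) absolutely_integrable_on {0..1}"
    using has_integral_Beta_real[OF assms(1,2)] by (intro nonnegative_absolutely_integrable_1) auto
  moreover have "g \<in> borel_measurable (lebesgue_on {0..1})"
    using g by (rule continuous_imp_measurable_on_sets_lebesgue) simp
  moreover have "bounded (g ` {0..1})"
    using g by (intro compact_imp_bounded compact_continuous_image) auto
  ultimately have "(\<lambda>t. g t * (t powr (p - 1) * (1 - t) powr (q - 1))) absolutely_integrable_on {0..1}"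
    using absolutely_integrable_bounded_measurable_product_real[of g "{0..1}"] by simp
  then show ?thesis by (simp add: absolutely_integrable_on_def mult.commute)
qed

section \<open>Termwise integration of nonnegative series\<close>

lemma sums_integral_nonneg_series:
  fixes f :: "nat \<Rightarrow> 'a::euclidean_space \<Rightarrow> real"
  assumes f: "\<And>n. f n integrable_on S" and nonneg: "\<And>n x. x \<in> S \<Longrightarrow> 0 \<le> f n x"
    and sums: "\<And>x. x \<in> S \<Longrightarrow> (\<lambda>n. f n x) sums F x" and F: "F integrable_on S"
  shows "(\<lambda>n. integral S (f n)) sums integral S F"
proof -
  define P where "P k x = (\<Sum>n<k. f n x)" for k x
  have P: "P k integrable_on S" for k
    unfolding P_def by (rule integrable_sum) (simp_all add: f)
  have "P k x \<le> F x" if "x \<in> S" for k x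
    unfolding P_def sums_unique[OF sums[OF that]]
    by (rule sum_le_suminf[OF sums_summable[OF sums[OF that]]]) (simp_all add: nonneg that)
  then have "integral S (P k) \<le> integral S F" for k
    by (rule integral_le[OF P F])
  moreover have "0 \<le> integral S (P k)" for k
    by (rule integral_nonneg[OF P]) (simp add: P_def sum_nonneg nonneg)
  ultimately have bounded: "bounded (range (\<lambda>k. integral S (P k)))"
    by (intro bounded_subset[OF bounded_closed_interval[of 0 "integral S F"]]) auto
  have mono: "P k x \<le> P (Suc k) x" if "x \<in> S" for k x
    using nonneg[OF that] by (simp add: P_def)
  have lim: "(\<lambda>k. P k x) \<longlonglongrightarrow> F x" if "x \<in> S" for x
    using sums[OF that] by (simp only: P_def sums_def)
  have "(\<lambda>k. integral S (P k)) \<longlonglongrightarrow> integral S F"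
    using monotone_convergence_increasing[OF P mono lim bounded] by (rule conjunct2)
  moreover have "integral S (P k) = (\<Sum>n<k. integral S (f n))" for k
    unfolding P_def by (rule Henstock_Kurzweil_Integration.integral_sum) (simp_all add: f)
  ultimately show ?thesis by (simp only: sums_def)
qed

lemma pochhammer_binomial_series:
  fixes a q :: real assumes "\<bar>q\<bar> < 1"
  shows "(\<lambda>n. pochhammer a n / fact n * q ^ n) sums (1 - q) powr (- a)"
proof -
  have "(- a gchoose n) * (- q) ^ n = pochhammer a n / fact n * q ^ n" for n
  proof -
    have "(- a gchoose n) * (- q) ^ n = ((- 1) ^ n * (- 1) ^ n) * (pochhammer a n / fact n * q ^ n)"
      unfolding gbinomial_pochhammer power_minus[of q n] by simp
    also have "(- 1 :: real) ^ n * (- 1) ^ n = 1"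
      by (simp add: power_mult_distrib[symmetric])
    finally show ?thesis by simp
  qed
  then show ?thesis
    using gen_binomial_real[of "- q" "- a"] assms by simp
qed

lemma one_minus_t_plus_t_sq_bounds:
  fixes t :: real assumes "0 \<le> t" "t \<le> 1"
  shows "3 / 4 \<le> 1 - t + t\<^sup>2" "1 - t + t\<^sup>2 \<le> 1"
proof -
  have "0 \<le> (t - 1 / 2)\<^sup>2" by simp
  then show "3 / 4 \<le> 1 - t + t\<^sup>2" by (simp add: power2_eq_square algebra_simps)
  have "t * t \<le> t * 1" using assms by (intro mult_left_mono) auto
  then show "1 - t + t\<^sup>2 \<le> 1" by (simp add: power2_eq_square)
qed

lemma powr_Beta_denominator_series:
  fixes t X A :: real
  assumes t: "0 \<le> t" "t \<le> 1" and X: "X \<ge> 0"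
  shows "(\<lambda>n. (1 + X) powr (- A) * (pochhammer A n / fact n * (X / (1 + X)) ^ n) * (1 - t + t\<^sup>2) ^ n)
         sums (1 + t * (1 - t) * X) powr (- A)"
proof -
  define q where "q = X / (1 + X) * (1 - t + t\<^sup>2)"
  have X1: "1 + X > 0" using X by simp
  have g: "0 \<le> 1 - t + t\<^sup>2" "1 - t + t\<^sup>2 \<le> 1"
    using one_minus_t_plus_t_sq_bounds[OF t] by linarith+
  have "0 \<le> q" unfolding q_def using g X by simp
  moreover have "q \<le> X / (1 + X)"
    unfolding q_def by (rule mult_left_le) (use g X in auto)
  moreover have "X / (1 + X) < 1" using X1 by simp
  ultimately have "\<bar>q\<bar> < 1" by simp
  from sums_mult[OF pochhammer_binomial_series[OF this], of "(1 + X) powr (- A)"]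
  have S: "(\<lambda>n. (1 + X) powr (- A) * (pochhammer A n / fact n * q ^ n)) sums ((1 + X) powr (- A) * (1 - q) powr (- A))" .
  have qn: "q ^ n = (X / (1 + X)) ^ n * (1 - t + t\<^sup>2) ^ n" for n
    unfolding q_def by (rule power_mult_distrib)
  have "1 - q = (1 + t * (1 - t) * X) / (1 + X)"
    using X1 by (simp add: q_def field_simps power2_eq_square)
  moreover have "1 + t * (1 - t) * X \<ge> 0" using t X by simp
  ultimately have val: "(1 + X) powr (- A) * (1 - q) powr (- A) = (1 + t * (1 - t) * X) powr (- A)"
    using X1 by (simp add: powr_divide)
  show ?thesis
    using S unfolding val qn by (simp only: mult.assoc)
qed

lemma pochhammer_series_Beta_weight:
  fixes t D p q :: real assumes t: "0 < t" "t < 1"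
  shows "(\<lambda>n. pochhammer D n / fact n * (t powr (p + D - 1) * (1 - t) powr (q + D - 1) * (1 - t + t\<^sup>2) ^ n))
         sums (t powr (p - 1) * (1 - t) powr (q - 1))"
proof -
  have "3 / 4 \<le> 1 - t + t\<^sup>2" "1 - t + t\<^sup>2 < 1"
    using one_minus_t_plus_t_sq_bounds[of t] t by (auto simp: power2_eq_square)
  then have "(\<lambda>n. pochhammer D n / fact n * (1 - t + t\<^sup>2) ^ n) sums (1 - (1 - t + t\<^sup>2)) powr (- D)"
    by (intro pochhammer_binomial_series) simp
  from sums_mult[OF this, of "t powr (p + D - 1) * (1 - t) powr (q + D - 1)"]
  have S: "(\<lambda>n. pochhammer D n / fact n * (t powr (p + D - 1) * (1 - t) powr (q + D - 1) * (1 - t + t\<^sup>2) ^ n))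
      sums (t powr (p + D - 1) * (1 - t) powr (q + D - 1) * (1 - (1 - t + t\<^sup>2)) powr (- D))"
    by (simp add: mult.left_commute)
  have "1 - (1 - t + t\<^sup>2) = t * (1 - t)" by (simp add: power2_eq_square algebra_simps)
  then have "t powr (p + D - 1) * (1 - t) powr (q + D - 1) * (1 - (1 - t + t\<^sup>2)) powr (- D)
      = (t powr (p + D - 1) * t powr (- D)) * ((1 - t) powr (q + D - 1) * (1 - t) powr (- D))"
    using t by (simp add: powr_mult)
  also have "\<dots> = t powr (p - 1) * (1 - t) powr (q - 1)"
    by (simp add: powr_add[symmetric])
  finally show ?thesis using S by simp
qed

section \<open>Sums of independent random vectors\<close>

lemma density_convolution_euclidean:
  fixes f g :: "'a::euclidean_space \<Rightarrow> ennreal"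
  assumes [measurable]: "f \<in> borel_measurable borel" "g \<in> borel_measurable borel"
    and "finite_measure (density lborel f)" "finite_measure (density lborel g)"
  shows "distr (density lborel f \<Otimes>\<^sub>M density lborel g) borel (\<lambda>(x, y). x + y)
       = density lborel (\<lambda>x. \<integral>\<^sup>+y. f (x - y) * g y \<partial>lborel)"
proof (rule measure_eqI)
  interpret F: finite_measure "density lborel f" by fact
  interpret G: finite_measure "density lborel g" by fact
  interpret pair_sigma_finite "density lborel f" "density lborel g" ..
  fix A assume "A \<in> sets (distr (density lborel f \<Otimes>\<^sub>M density lborel g) borel (\<lambda>(x, y). x + y))"
  then have [measurable]: "A \<in> sets borel" by simp
  have shift: "(\<integral>\<^sup>+x. g y * (f x * indicator A (x + y)) \<partial>lborel) = (\<integral>\<^sup>+x. f (x - y) * g y * indicator A x \<partial>lborel)"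
    for y :: 'a
  proof -
    have "(\<integral>\<^sup>+x. g y * (f x * indicator A (x + y)) \<partial>lborel)
        = (\<integral>\<^sup>+x. g y * (f x * indicator A (x + y)) \<partial>distr lborel borel ((+) (- y)))"
      by (simp add: lborel_distr_plus)
    also have "\<dots> = (\<integral>\<^sup>+x. f (x - y) * g y * indicator A x \<partial>lborel)"
      by (subst nn_integral_distr) (auto simp: ac_simps)
    finally show ?thesis .
  qed
  have "emeasure (distr (density lborel f \<Otimes>\<^sub>M density lborel g) borel (\<lambda>(x, y). x + y)) A
      = (\<integral>\<^sup>+p. indicator A (fst p + snd p) \<partial>(density lborel f \<Otimes>\<^sub>M density lborel g))"
    by (subst nn_integral_indicator[symmetric], simp, subst nn_integral_distr) (auto simp: split_beta')
  also have "\<dots> = (\<integral>\<^sup>+x. \<integral>\<^sup>+y. indicator A (x + y) \<partial>density lborel g \<partial>density lborel f)"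
    by (subst G.nn_integral_fst[symmetric]) auto
  also have "\<dots> = (\<integral>\<^sup>+x. \<integral>\<^sup>+y. g y * (f x * indicator A (x + y)) \<partial>lborel \<partial>lborel)"
    by (auto simp: nn_integral_density ac_simps intro!: nn_integral_cong
             simp flip: nn_integral_cmult)
  also have "\<dots> = (\<integral>\<^sup>+y. \<integral>\<^sup>+x. f (x - y) * g y * indicator A x \<partial>lborel \<partial>lborel)"
    by (subst lborel_pair.Fubini') (simp_all add: shift)
  also have "\<dots> = emeasure (density lborel (\<lambda>x. \<integral>\<^sup>+y. f (x - y) * g y \<partial>lborel)) A"
    by (subst lborel_pair.Fubini') (auto simp: emeasure_density nn_integral_multc intro!: nn_integral_cong)
  finally show "emeasure (distr (density lborel f \<Otimes>\<^sub>M density lborel g) borel (\<lambda>(x, y). x + y)) A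
      = emeasure (density lborel (\<lambda>x. \<integral>\<^sup>+y. f (x - y) * g y \<partial>lborel)) A" .
qed simp

lemma (in prob_space) distributed_add_euclidean:
  fixes X Y :: "'a \<Rightarrow> 'b::euclidean_space"
  assumes indep: "indep_var borel X borel Y"
    and X: "distributed M lborel X f" and Y: "distributed M lborel Y g"
  shows "distributed M lborel (\<lambda>\<omega>. X \<omega> + Y \<omega>) (\<lambda>x. \<integral>\<^sup>+y. f (x - y) * g y \<partial>lborel)"
  unfolding distributed_def
proof safe
  have [measurable]: "f \<in> borel_measurable borel" "g \<in> borel_measurable borel"
    using distributed_borel_measurable[OF X] distributed_borel_measurable[OF Y] by simp_all
  have [measurable]: "X \<in> measurable M borel" "Y \<in> measurable M borel"
    using distributed_measurable[OF X] distributed_measurable[OF Y] by (auto cong: measurable_cong_sets)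
  show "(\<lambda>x. \<integral>\<^sup>+y. f (x - y) * g y \<partial>lborel) \<in> borel_measurable lborel"
    by measurable
  show "random_variable lborel (\<lambda>\<omega>. X \<omega> + Y \<omega>)"
    by simp
  have "distr M borel (\<lambda>\<omega>. X \<omega> + Y \<omega>) = distr (distr M (borel \<Otimes>\<^sub>M borel) (\<lambda>\<omega>. (X \<omega>, Y \<omega>))) borel (\<lambda>(x, y). x + y)"
    by (subst distr_distr) (auto simp: o_def)
  also have "distr M (borel \<Otimes>\<^sub>M borel) (\<lambda>\<omega>. (X \<omega>, Y \<omega>)) = distr M borel X \<Otimes>\<^sub>M distr M borel Y"
    using indep unfolding indep_var_distribution_eq by simp
  also have "\<dots> = density lborel f \<Otimes>\<^sub>M density lborel g"
    using distributed_distr_eq_density[OF X] distributed_distr_eq_density[OF Y] by (simp cong: distr_cong)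
  also have "distr (density lborel f \<Otimes>\<^sub>M density lborel g) borel (\<lambda>(x, y). x + y)
      = density lborel (\<lambda>x. \<integral>\<^sup>+y. f (x - y) * g y \<partial>lborel)"
    using distributed_finite_measure_density[OF X] distributed_finite_measure_density[OF Y]
    by (intro density_convolution_euclidean) simp_all
  finally show "distr M lborel (\<lambda>\<omega>. X \<omega> + Y \<omega>) = density lborel (\<lambda>x. \<integral>\<^sup>+y. f (x - y) * g y \<partial>lborel)"
    by (simp cong: distr_cong)
qed

section \<open>The substitution \<open>s = r t\<close>, \<open>u = r (1 - t)\<close>\<close>

lemma nn_integral_quadrant_substitution:
  fixes h :: "real \<Rightarrow> real \<Rightarrow> ennreal"
  assumes [measurable]: "case_prod h \<in> borel_measurable (borel \<Otimes>\<^sub>M borel)"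
  shows "(\<integral>\<^sup>+s. \<integral>\<^sup>+u. indicator {0<..} s * indicator {0<..} u * h s u \<partial>lborel \<partial>lborel)
       = (\<integral>\<^sup>+t. \<integral>\<^sup>+r. indicator {0<..<1} t * indicator {0<..} r * ennreal r * h (r * t) (r * (1 - t))
              \<partial>lborel \<partial>lborel)"
proof -
  define H where "H s u = indicator {0<..} s * indicator {0<..} u * h s u" for s u
  have [measurable]: "case_prod H \<in> borel_measurable (borel \<Otimes>\<^sub>M borel)"
    unfolding H_def by measurable
  have rescale: "(\<integral>\<^sup>+s. H s (r - s) \<partial>lborel)
      = (\<integral>\<^sup>+t. indicator {0<..<1} t * indicator {0<..} r * ennreal r * h (r * t) (r * (1 - t)) \<partial>lborel)" for r
  proof (cases "r > 0")
    case True
    have "H (r * t) (r - r * t) = indicator {0<..<1} t * h (r * t) (r * (1 - t))" for t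
      using True by (auto simp: H_def indicator_def right_diff_distrib zero_less_mult_iff)
    then show ?thesis
      using nn_integral_real_affine[of "\<lambda>s. H s (r - s)" r 0] True
      by (simp add: nn_integral_cmult[symmetric] ac_simps)
  next
    case False
    then have "H s (r - s) = 0" for s by (auto simp: H_def split: split_indicator)
    with False show ?thesis by simp
  qed
  have shift: "(\<integral>\<^sup>+u. H s u \<partial>lborel) = (\<integral>\<^sup>+r. H s (r - s) \<partial>lborel)" for s
    using nn_integral_real_affine[of "H s" 1 "- s"] by simp
  have "(\<integral>\<^sup>+s. \<integral>\<^sup>+u. H s u \<partial>lborel \<partial>lborel) = (\<integral>\<^sup>+s. \<integral>\<^sup>+r. H s (r - s) \<partial>lborel \<partial>lborel)"
    by (simp only: shift)
  also have "\<dots> = (\<integral>\<^sup>+r. \<integral>\<^sup>+s. H s (r - s) \<partial>lborel \<partial>lborel)"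
    by (rule lborel_pair.Fubini'[symmetric]) measurable
  also have "\<dots> = (\<integral>\<^sup>+t. \<integral>\<^sup>+r. indicator {0<..<1} t * indicator {0<..} r * ennreal r * h (r * t) (r * (1 - t))
      \<partial>lborel \<partial>lborel)"
    by (simp only: rescale) (rule lborel_pair.Fubini', measurable)
  finally show ?thesis unfolding H_def .
qed

lemma nn_integral_quadrant_Gamma_Beta:
  fixes a b d X :: real
  assumes X: "X \<ge> 0" and A: "a + b - d > 0"
  shows "(\<integral>\<^sup>+s. \<integral>\<^sup>+u. indicator {0<..} s * indicator {0<..} u
            * ennreal (s powr (a - 1) * u powr (b - 1) * exp (- (s + u))
                       * exp (- (s * u / (s + u) * X)) * (pi / (s + u)) powr d) \<partial>lborel \<partial>lborel)
       = (\<integral>\<^sup>+t. ennreal (pi powr d * Gamma (a + b - d)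
            * (t powr (a - 1) * (1 - t) powr (b - 1) * (1 + t * (1 - t) * X) powr (- (a + b - d))))
            * indicator {0<..<1} t \<partial>lborel)"
proof -
  define g where "g s u = s powr (a - 1) * u powr (b - 1) * exp (- (s + u))
                       * exp (- (s * u / (s + u) * X)) * (pi / (s + u)) powr d" for s u
  define w where "w t = pi powr d * (t powr (a - 1) * (1 - t) powr (b - 1))" for t
  have substitution: "r * g (r * t) (r * (1 - t)) = w t * (r powr (a + b - d - 1) * exp (- ((1 + t * (1 - t) * X) * r)))"
    if r: "r > 0" and t: "0 < t" "t < 1" for r t
  proof -
    have sum: "r * t + r * (1 - t) = r" and prod: "r * t * (r * (1 - t)) / r = r * (t * (1 - t))"
      using r by (simp_all add: field_simps)
    have "r * g (r * t) (r * (1 - t))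
        = (r * ((r * t) powr (a - 1) * (r * (1 - t)) powr (b - 1) * (pi / r) powr d))
          * (exp (- r) * exp (- (r * (t * (1 - t)) * X)))"
      unfolding g_def sum prod by (simp only: mult_ac)
    also have "r * ((r * t) powr (a - 1) * (r * (1 - t)) powr (b - 1) * (pi / r) powr d)
        = w t * r powr (a + b - d - 1)"
      using r t
      by (simp only: powr_mult[of r t] powr_mult[of r "1 - t"] powr_divide)
         (simp_all add: w_def powr_diff powr_add field_simps)
    also have "exp (- r) * exp (- (r * (t * (1 - t)) * X)) = exp (- ((1 + t * (1 - t) * X) * r))"
      by (simp add: exp_add[symmetric] algebra_simps)
    finally show ?thesis by (simp only: mult.assoc)
  qed
  have inner: "(\<integral>\<^sup>+r. indicator {0<..<1} t * indicator {0<..} r * ennreal r * ennreal (g (r * t) (r * (1 - t))) \<partial>lborel)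
      = ennreal (pi powr d * Gamma (a + b - d)
            * (t powr (a - 1) * (1 - t) powr (b - 1) * (1 + t * (1 - t) * X) powr (- (a + b - d))))
            * indicator {0<..<1} t" for t
  proof (cases "0 < t \<and> t < 1")
    case True
    have c: "1 + t * (1 - t) * X > 0" using True X by (simp add: add_pos_nonneg)
    have w: "w t \<ge> 0" by (simp add: w_def)
    have "(\<integral>\<^sup>+r. indicator {0<..<1} t * indicator {0<..} r * ennreal r * ennreal (g (r * t) (r * (1 - t))) \<partial>lborel)
        = (\<integral>\<^sup>+r. ennreal (w t) * ennreal (indicator {0<..} r * r powr (a + b - d - 1) * exp (- ((1 + t * (1 - t) * X) * r))) \<partial>lborel)"
      using True by (intro nn_integral_cong)
        (auto simp: substitution ennreal_mult'[symmetric] ennreal_mult[symmetric] mult.assoc split: split_indicator;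
         simp add: ennreal_mult'[OF w])
    also have "\<dots> = ennreal (w t) * ennreal (Gamma (a + b - d) / (1 + t * (1 - t) * X) powr (a + b - d))"
      by (simp add: nn_integral_cmult nn_integral_Gamma_kernel[OF A c])
    finally show ?thesis
      using True w unfolding powr_minus_divide by (simp add: w_def ennreal_mult'[symmetric] mult_ac)
  qed (auto split: split_indicator)
  have "(\<integral>\<^sup>+s. \<integral>\<^sup>+u. indicator {0<..} s * indicator {0<..} u * ennreal (g s u) \<partial>lborel \<partial>lborel)
      = (\<integral>\<^sup>+t. \<integral>\<^sup>+r. indicator {0<..<1} t * indicator {0<..} r * ennreal r * ennreal (g (r * t) (r * (1 - t)))
           \<partial>lborel \<partial>lborel)"
    by (rule nn_integral_quadrant_substitution) (unfold g_def, measurable)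
  then show ?thesis
    unfolding inner by (simp only: g_def)
qed

section \<open>Convolution of Student densities\<close>

lemma student_density_Gamma_mixture:
  fixes \<nu> :: real and z :: "'a::euclidean_space"
  assumes \<nu>: "\<nu> > 0"
  shows "ennreal (student_density \<nu> z) = ennreal (1 / (Gamma \<nu> * pi powr (real DIM('a) / 2))) *
    (\<integral>\<^sup>+s. ennreal (indicator {0<..} s * s powr (\<nu> + real DIM('a) / 2 - 1) * exp (- ((1 + (norm z)\<^sup>2) * s))) \<partial>lborel)"
proof -
  have "\<nu> + real DIM('a) / 2 > 0" "1 + (norm z)\<^sup>2 > 0"
    using \<nu> by (simp_all add: add_pos_nonneg)
  note kernel = nn_integral_Gamma_kernel[OF this]
  have density: "student_density \<nu> z = 1 / (Gamma \<nu> * pi powr (real DIM('a) / 2))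
      * (Gamma (\<nu> + real DIM('a) / 2) / (1 + (norm z)\<^sup>2) powr (\<nu> + real DIM('a) / 2))"
    using powr_minus_divide[of "1 + (norm z)\<^sup>2" "\<nu> + real DIM('a) / 2"]
    unfolding student_density_def by (simp add: algebra_simps)
  have "1 / (Gamma \<nu> * pi powr (real DIM('a) / 2)) \<ge> 0"
    using \<nu> by (simp add: Gamma_real_pos less_imp_le)
  then show ?thesis
    unfolding kernel density by (rule ennreal_mult')
qed

lemma nn_integral_student_convolution_quadrant:
  fixes \<nu> \<mu> :: real and x :: "'a::euclidean_space"
  assumes \<nu>: "\<nu> > 0" and \<mu>: "\<mu> > 0"
  defines "D \<equiv> real DIM('a) / 2"
  shows "(\<integral>\<^sup>+y. ennreal (student_density \<nu> (x - y)) * ennreal (student_density \<mu> y) \<partial>lborel)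
    = ennreal (1 / (Gamma \<nu> * pi powr D) * (1 / (Gamma \<mu> * pi powr D)))
      * (\<integral>\<^sup>+s. \<integral>\<^sup>+u. indicator {0<..} s * indicator {0<..} u
           * ennreal (s powr (\<mu> + D - 1) * u powr (\<nu> + D - 1) * exp (- (s + u))
                      * exp (- (s * u / (s + u) * (norm x)\<^sup>2)) * (pi / (s + u)) powr D) \<partial>lborel \<partial>lborel)"
proof -
  define K1 where "K1 = 1 / (Gamma \<nu> * pi powr D)"
  define K2 where "K2 = 1 / (Gamma \<mu> * pi powr D)"
  have K1: "K1 \<ge> 0" using \<nu> by (simp add: K1_def Gamma_real_pos less_imp_le)
  define S where "S s y = ennreal (indicator {0<..} s * s powr (\<mu> + D - 1) * exp (- ((1 + (norm y)\<^sup>2) * s)))"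
    for s and y :: 'a
  define U where "U u y = ennreal (indicator {0<..} u * u powr (\<nu> + D - 1) * exp (- ((1 + (norm (x - y))\<^sup>2) * u)))"
    for u and y :: 'a
  have [measurable]: "case_prod S \<in> borel_measurable (borel \<Otimes>\<^sub>M borel)" "case_prod U \<in> borel_measurable (borel \<Otimes>\<^sub>M borel)"
    unfolding S_def U_def by measurable
  have mixture: "ennreal (student_density \<nu> (x - y)) * ennreal (student_density \<mu> y)
      = ennreal (K1 * K2) * (\<integral>\<^sup>+s. \<integral>\<^sup>+u. S s y * U u y \<partial>lborel \<partial>lborel)" for y :: 'a
  proof -
    have "ennreal (student_density \<nu> (x - y)) = ennreal K1 * (\<integral>\<^sup>+u. U u y \<partial>lborel)"
      unfolding K1_def U_def D_def by (rule student_density_Gamma_mixture[OF \<nu>])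
    moreover have "ennreal (student_density \<mu> y) = ennreal K2 * (\<integral>\<^sup>+s. S s y \<partial>lborel)"
      unfolding K2_def S_def D_def by (rule student_density_Gamma_mixture[OF \<mu>])
    moreover have "(\<integral>\<^sup>+s. \<integral>\<^sup>+u. S s y * U u y \<partial>lborel \<partial>lborel) = (\<integral>\<^sup>+s. S s y \<partial>lborel) * (\<integral>\<^sup>+u. U u y \<partial>lborel)"
      by (simp add: nn_integral_cmult nn_integral_multc)
    ultimately show ?thesis
      by (simp add: ennreal_mult'[OF K1] ac_simps)
  qed
  have gaussian: "(\<integral>\<^sup>+y. S s y * U u y \<partial>lborel)
      = indicator {0<..} s * indicator {0<..} u
        * ennreal (s powr (\<mu> + D - 1) * u powr (\<nu> + D - 1) * exp (- (s + u))
                   * exp (- (s * u / (s + u) * (norm x)\<^sup>2)) * (pi / (s + u)) powr D)" for s u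
  proof (cases "s > 0 \<and> u > 0")
    case True
    define C where "C = s powr (\<mu> + D - 1) * u powr (\<nu> + D - 1) * exp (- (s + u))"
    have su: "s + u > 0" using True by simp
    have "S s y * U u y = ennreal C * ennreal (exp (- (s * (norm y)\<^sup>2 + u * (norm (x - y))\<^sup>2)))" for y
      using True by (simp add: S_def U_def C_def ennreal_mult'[symmetric] exp_add[symmetric] algebra_simps)
    then have "(\<integral>\<^sup>+y. S s y * U u y \<partial>lborel)
        = ennreal C * (\<integral>\<^sup>+y. ennreal (exp (- (s * (norm y)\<^sup>2 + u * (norm (x - y))\<^sup>2))) \<partial>lborel)"
      by (simp add: nn_integral_cmult)
    also have "\<dots> = ennreal C * ennreal (exp (- (s * u / (s + u) * (norm x)\<^sup>2)) * (pi / (s + u)) powr D)"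
      by (simp only: nn_integral_exp_neg_norm_squares[OF su] D_def)
    finally show ?thesis
      using True by (simp add: C_def ennreal_mult'[symmetric] mult_ac)
  qed (auto simp: S_def U_def)
  have "(\<integral>\<^sup>+y. ennreal (student_density \<nu> (x - y)) * ennreal (student_density \<mu> y) \<partial>lborel)
      = ennreal (K1 * K2) * (\<integral>\<^sup>+y. \<integral>\<^sup>+s. \<integral>\<^sup>+u. S s y * U u y \<partial>lborel \<partial>lborel \<partial>lborel)"
    by (simp add: mixture nn_integral_cmult)
  also have "(\<integral>\<^sup>+y. \<integral>\<^sup>+s. \<integral>\<^sup>+u. S s y * U u y \<partial>lborel \<partial>lborel \<partial>lborel)
      = (\<integral>\<^sup>+s. \<integral>\<^sup>+u. \<integral>\<^sup>+y. S s y * U u y \<partial>lborel \<partial>lborel \<partial>lborel)"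
    by (subst pair_sigma_finite.Fubini'[of lborel lborel, symmetric], unfold_locales, measurable)
       (intro nn_integral_cong pair_sigma_finite.Fubini'[of lborel lborel, symmetric], unfold_locales, measurable)
  finally show ?thesis
    unfolding gaussian K1_def K2_def .
qed

lemma nn_integral_student_convolution:
  fixes \<nu> \<mu> :: real and x :: "'a::euclidean_space"
  assumes \<nu>: "\<nu> > 0" and \<mu>: "\<mu> > 0"
  defines "D \<equiv> real DIM('a) / 2"
  shows "(\<integral>\<^sup>+y. ennreal (student_density \<nu> (x - y)) * ennreal (student_density \<mu> y) \<partial>lborel)
    = ennreal (Gamma (\<nu> + \<mu> + D) / (Gamma \<nu> * Gamma \<mu> * pi powr D)
        * integral {0..1} (\<lambda>t. t powr (\<mu> + D - 1) * (1 - t) powr (\<nu> + D - 1)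
                                * (1 + t * (1 - t) * (norm x)\<^sup>2) powr (- (\<nu> + \<mu> + D))))"
proof -
  define A where "A = \<nu> + \<mu> + D"
  define F where "F t = t powr (\<mu> + D - 1) * (1 - t) powr (\<nu> + D - 1) * (1 + t * (1 - t) * (norm x)\<^sup>2) powr (- A)"
    for t :: real
  have D: "D > 0" by (simp add: D_def)
  have A: "\<mu> + D + (\<nu> + D) - D = A" "A > 0" using \<nu> \<mu> D by (simp_all add: A_def)
  have pos: "1 + t * (1 - t) * (norm x)\<^sup>2 > 0" if "0 \<le> t" "t \<le> 1" for t
    using that by (intro add_pos_nonneg mult_nonneg_nonneg) auto
  have "continuous_on {0..1} (\<lambda>t. (1 + t * (1 - t) * (norm x)\<^sup>2) powr (- A))"
    by (intro continuous_intros) (use pos in fastforce)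
  then have "F integrable_on {0..1}"
    unfolding F_def using \<nu> \<mu> D by (intro integrable_Beta_kernel_mult_continuous) simp_all
  then have "((\<lambda>t. pi powr D * Gamma A * F t) has_integral pi powr D * Gamma A * integral {0..1} F) {0<..<1}"
    unfolding has_integral_Icc_iff_Ioo[symmetric] by (intro has_integral_mult_right integrable_integral)
  then have Beta_form: "(\<integral>\<^sup>+t. ennreal (pi powr D * Gamma A * F t) * indicator {0<..<1} t \<partial>lborel)
      = ennreal (pi powr D * Gamma A * integral {0..1} F)"
    using A(2) by (intro nn_integral_has_integral_lebesgue') (auto simp: F_def Gamma_real_pos less_imp_le)
  have "(\<integral>\<^sup>+y. ennreal (student_density \<nu> (x - y)) * ennreal (student_density \<mu> y) \<partial>lborel)
      = ennreal (1 / (Gamma \<nu> * pi powr D) * (1 / (Gamma \<mu> * pi powr D)))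
        * (\<integral>\<^sup>+s. \<integral>\<^sup>+u. indicator {0<..} s * indicator {0<..} u
           * ennreal (s powr (\<mu> + D - 1) * u powr (\<nu> + D - 1) * exp (- (s + u))
                      * exp (- (s * u / (s + u) * (norm x)\<^sup>2)) * (pi / (s + u)) powr D) \<partial>lborel \<partial>lborel)"
    unfolding D_def by (rule nn_integral_student_convolution_quadrant[OF \<nu> \<mu>])
  also have "\<dots> = ennreal (1 / (Gamma \<nu> * pi powr D) * (1 / (Gamma \<mu> * pi powr D)))
      * (\<integral>\<^sup>+t. ennreal (pi powr D * Gamma A * F t) * indicator {0<..<1} t \<partial>lborel)"
    using nn_integral_quadrant_Gamma_Beta[of "(norm x)\<^sup>2" "\<mu> + D" "\<nu> + D" D] A
    unfolding A(1) F_def by simp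
  also note Beta_form
  also have "ennreal (1 / (Gamma \<nu> * pi powr D) * (1 / (Gamma \<mu> * pi powr D)))
      * ennreal (pi powr D * Gamma A * integral {0..1} F)
      = ennreal (1 / (Gamma \<nu> * pi powr D) * (1 / (Gamma \<mu> * pi powr D))
      * (pi powr D * Gamma A * integral {0..1} F))"
    using \<nu> \<mu> by (intro ennreal_mult'[symmetric]) (simp add: Gamma_real_pos less_imp_le)
  also have "1 / (Gamma \<nu> * pi powr D) * (1 / (Gamma \<mu> * pi powr D)) * (pi powr D * Gamma A * integral {0..1} F)
      = Gamma A / (Gamma \<nu> * Gamma \<mu> * pi powr D) * integral {0..1} F"
    using Gamma_real_pos[OF \<nu>] Gamma_real_pos[OF \<mu>] by (simp add: field_simps)
  finally show ?thesis unfolding F_def A_def .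
qed

lemma c_coeff_mult_phi_density:
  fixes \<nu> \<mu> :: real and x :: "'a::euclidean_space"
  assumes \<nu>: "\<nu> > 0" and \<mu>: "\<mu> > 0"
  defines "D \<equiv> real DIM('a) / 2" and "A \<equiv> \<nu> + \<mu> + real DIM('a) / 2" and "X \<equiv> (norm x)\<^sup>2"
  shows "c_coeff \<nu> \<mu> DIM('a) n * phi_density n (\<nu> + \<mu>) x
    = Gamma A / (Gamma \<nu> * Gamma \<mu> * pi powr D)
      * ((1 + X) powr (- A) * (pochhammer A n / fact n * (X / (1 + X)) ^ n))
      * integral {0..1} (\<lambda>t. t powr (\<mu> + D - 1) * (1 - t) powr (\<nu> + D - 1) * (1 - t + t\<^sup>2) ^ n)"
proof -
  define J where "J = integral {0..1} (\<lambda>t. t powr (\<mu> + D - 1) * (1 - t) powr (\<nu> + D - 1) * (1 - t + t\<^sup>2) ^ n)"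
  have D: "D > 0" and A: "A = \<nu> + \<mu> + D" "A > 0" and X: "1 + X > 0"
    using \<nu> \<mu> by (simp_all add: D_def A_def X_def add_pos_nonneg)
  have Gamma_shift: "Gamma (a + real n) = pochhammer a n * Gamma a" if "a > 0" for a :: real
  proof -
    have "a \<notin> \<int>\<^sub>\<le>\<^sub>0" using that nonpos_Ints_nonpos by fastforce
    then show ?thesis using pochhammer_Gamma[of a n] Gamma_real_pos[OF that] by (simp add: field_simps)
  qed
  have nonzero: "Gamma \<nu> \<noteq> 0" "Gamma \<mu> \<noteq> 0" "Gamma (\<mu> + \<nu>) \<noteq> 0" "Gamma D \<noteq> 0" "Gamma A \<noteq> 0"
    "pochhammer D n \<noteq> 0" "pochhammer A n \<noteq> 0"
    using \<nu> \<mu> D A(2) by (auto intro!: dual_order.strict_implies_not_eq Gamma_real_pos pochhammer_pos)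
  have "c_coeff \<nu> \<mu> DIM('a) n * phi_density n (\<nu> + \<mu>) x
      = Gamma (\<nu> + \<mu>) / (Gamma \<nu> * Gamma \<mu>) * pochhammer D n / fact n * J *
        (Gamma D / (pi powr D * (Gamma (\<nu> + \<mu>) * Gamma (D + real n) / Gamma (A + real n)))
         * X ^ n / ((1 + X) powr A * (1 + X) ^ n))"
    unfolding c_coeff_def phi_density_def Beta_def J_def D_def[symmetric] A(1) X_def
    using X by (simp add: power_mult powr_add powr_realpow[symmetric] add_ac X_def)
  also have "\<dots> = Gamma A / (Gamma \<nu> * Gamma \<mu> * pi powr D)
      * ((1 + X) powr (- A) * (pochhammer A n / fact n * (X / (1 + X)) ^ n)) * J"
    using nonzero X unfolding Gamma_shift[OF D] Gamma_shift[OF A(2)] powr_minus_divide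
    by (simp add: field_simps power_divide)
  finally show ?thesis unfolding J_def .
qed

lemma nn_integral_student_convolution_series:
  fixes \<nu> \<mu> :: real and x :: "'a::euclidean_space"
  assumes \<nu>: "\<nu> > 0" and \<mu>: "\<mu> > 0"
  shows "(\<integral>\<^sup>+y. ennreal (student_density \<nu> (x - y)) * ennreal (student_density \<mu> y) \<partial>lborel)
       = ennreal (\<Sum>n. c_coeff \<nu> \<mu> DIM('a) n * phi_density n (\<nu> + \<mu>) x)"
proof -
  define D where "D = real DIM('a) / 2"
  define A where "A = \<nu> + \<mu> + D"
  define X where "X = (norm x)\<^sup>2"
  define K where "K = Gamma A / (Gamma \<nu> * Gamma \<mu> * pi powr D)"
  define T where "T n = (1 + X) powr (- A) * (pochhammer A n / fact n * (X / (1 + X)) ^ n)" for n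
  define w where "w t = t powr (\<mu> + D - 1) * (1 - t) powr (\<nu> + D - 1)" for t :: real
  have D: "D > 0" and A: "A > 0" and X: "X \<ge> 0"
    using \<nu> \<mu> by (simp_all add: D_def A_def X_def)
  have T: "T n \<ge> 0" for n
    using A X by (simp add: T_def pochhammer_pos less_imp_le)
  have g: "0 \<le> 1 - t + t\<^sup>2" if "t \<in> {0..1}" for t :: real
    using one_minus_t_plus_t_sq_bounds[of t] that by simp
  have pos: "1 + t * (1 - t) * X > 0" if "0 \<le> t" "t \<le> 1" for t :: real
    using that X by (intro add_pos_nonneg mult_nonneg_nonneg) auto
  have "(\<lambda>t. w t * (1 - t + t\<^sup>2) ^ n) integrable_on {0..1}" for n
    unfolding w_def using \<nu> \<mu> D
    by (intro integrable_Beta_kernel_mult_continuous continuous_intros) simp_all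
  moreover have "(\<lambda>t. w t * (1 + t * (1 - t) * X) powr (- A)) integrable_on {0..1}"
    unfolding w_def using \<nu> \<mu> D
    by (intro integrable_Beta_kernel_mult_continuous continuous_intros) (use pos in fastforce)+
  moreover have "(\<lambda>n. T n * (w t * (1 - t + t\<^sup>2) ^ n)) sums (w t * (1 + t * (1 - t) * X) powr (- A))"
    if "t \<in> {0..1}" for t
    using sums_mult[OF powr_Beta_denominator_series[of t X A], of "w t"] that X
    by (simp add: T_def mult_ac)
  ultimately have "(\<lambda>n. integral {0..1} (\<lambda>t. T n * (w t * (1 - t + t\<^sup>2) ^ n)))
      sums integral {0..1} (\<lambda>t. w t * (1 + t * (1 - t) * X) powr (- A))"
    by (intro sums_integral_nonneg_series integrable_on_mult_right)
       (auto simp: w_def T g intro!: mult_nonneg_nonneg)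
  then have "(\<lambda>n. K * (T n * integral {0..1} (\<lambda>t. w t * (1 - t + t\<^sup>2) ^ n)))
      sums (K * integral {0..1} (\<lambda>t. w t * (1 + t * (1 - t) * X) powr (- A)))"
    by (intro sums_mult) simp
  moreover have "K * (T n * integral {0..1} (\<lambda>t. w t * (1 - t + t\<^sup>2) ^ n))
      = c_coeff \<nu> \<mu> DIM('a) n * phi_density n (\<nu> + \<mu>) x" for n
    using c_coeff_mult_phi_density[OF \<nu> \<mu>, of n x]
    unfolding K_def T_def w_def A_def D_def X_def by (simp only: mult.assoc)
  ultimately have "(\<lambda>n. c_coeff \<nu> \<mu> DIM('a) n * phi_density n (\<nu> + \<mu>) x)
      sums (K * integral {0..1} (\<lambda>t. w t * (1 + t * (1 - t) * X) powr (- A)))"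
    by simp
  then show ?thesis
    using nn_integral_student_convolution[OF \<nu> \<mu>, of x]
    unfolding K_def w_def A_def D_def X_def by (simp add: sums_iff)
qed

lemma c_coeff_pos:
  fixes \<nu> \<mu> :: real and d :: nat
  assumes \<nu>: "\<nu> > 0" and \<mu>: "\<mu> > 0" and d: "d > 0"
  shows "c_coeff \<nu> \<mu> d n > 0"
proof -
  define D where "D = real d / 2"
  define w where "w t = t powr (\<mu> + D - 1) * (1 - t) powr (\<nu> + D - 1)" for t :: real
  have D: "D > 0" using d by (simp add: D_def)
  then have shape: "\<mu> + D > 0" "\<nu> + D > 0" using \<nu> \<mu> by simp_all
  have lower: "((\<lambda>t. (3 / 4) ^ n * w t) has_integral (3 / 4) ^ n * Beta (\<mu> + D) (\<nu> + D)) {0..1}"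
    unfolding w_def by (intro has_integral_mult_right has_integral_Beta_real shape)
  have int: "(\<lambda>t. w t * (1 - t + t\<^sup>2) ^ n) integrable_on {0..1}"
    unfolding w_def by (intro integrable_Beta_kernel_mult_continuous continuous_intros shape)
  have le: "(3 / 4) ^ n * w t \<le> w t * (1 - t + t\<^sup>2) ^ n" if "t \<in> {0..1}" for t
    using one_minus_t_plus_t_sq_bounds[of t] that
    by (subst mult.commute) (intro mult_left_mono power_mono, auto simp: w_def)
  have "(3 / 4) ^ n * Beta (\<mu> + D) (\<nu> + D) \<le> integral {0..1} (\<lambda>t. w t * (1 - t + t\<^sup>2) ^ n)"
    by (rule has_integral_le[OF lower integrable_integral[OF int] le])
  moreover have "(3 / 4) ^ n * Beta (\<mu> + D) (\<nu> + D) > 0"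
    using Beta_real_pos[OF shape] by simp
  ultimately have "integral {0..1} (\<lambda>t. w t * (1 - t + t\<^sup>2) ^ n) > 0"
    by linarith
  then show ?thesis
    using Beta_real_pos[OF \<nu> \<mu>] pochhammer_pos[OF D, of n]
    unfolding c_coeff_def D_def[symmetric] w_def by simp
qed

lemma c_coeff_sums_one:
  fixes \<nu> \<mu> :: real and d :: nat
  assumes \<nu>: "\<nu> > 0" and \<mu>: "\<mu> > 0" and d: "d > 0"
  shows "(\<lambda>n. c_coeff \<nu> \<mu> d n) sums 1"
proof -
  define D where "D = real d / 2"
  define B where "B = Beta \<nu> \<mu>"
  define a where "a n = 1 / B * pochhammer D n / fact n" for n
  define w where "w t = t powr (\<mu> + D - 1) * (1 - t) powr (\<nu> + D - 1)" for t :: real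
  have D: "D > 0" using d by (simp add: D_def)
  have B: "B > 0" unfolding B_def using \<nu> \<mu> by (rule Beta_real_pos)
  have a: "a n \<ge> 0" for n using B D by (simp add: a_def pochhammer_pos less_imp_le)
  \<comment> \<open>On the closed interval the expansion fails: \<open>1 - t + t\<^sup>2 = 1\<close> at both endpoints.\<close>
  have c: "c_coeff \<nu> \<mu> d n = integral {0<..<1} (\<lambda>t. a n * (w t * (1 - t + t\<^sup>2) ^ n))" for n
    by (simp add: c_coeff_def a_def w_def B_def D_def integral_open_interval_real[symmetric])
  have "(\<lambda>t. w t * (1 - t + t\<^sup>2) ^ n) integrable_on {0<..<1}" for n
    unfolding w_def integrable_on_open_interval_real using \<nu> \<mu> D
    by (intro integrable_Beta_kernel_mult_continuous continuous_intros) simp_all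
  moreover have Beta: "((\<lambda>t. 1 / B * (t powr (\<mu> - 1) * (1 - t) powr (\<nu> - 1))) has_integral 1) {0<..<1}"
    using has_integral_mult_right[OF has_integral_Beta_real[OF \<mu> \<nu>], of "1 / B"] B
    by (simp add: has_integral_Icc_iff_Ioo B_def Beta_commute)
  moreover have "(\<lambda>n. a n * (w t * (1 - t + t\<^sup>2) ^ n)) sums (1 / B * (t powr (\<mu> - 1) * (1 - t) powr (\<nu> - 1)))"
    if "t \<in> {0<..<1}" for t
    using sums_mult[OF pochhammer_series_Beta_weight[of t D \<mu> \<nu>], of "1 / B"] that
    by (simp add: a_def w_def)
  ultimately have "(\<lambda>n. integral {0<..<1} (\<lambda>t. a n * (w t * (1 - t + t\<^sup>2) ^ n))) sums
      integral {0<..<1} (\<lambda>t. 1 / B * (t powr (\<mu> - 1) * (1 - t) powr (\<nu> - 1)))"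
    by (intro sums_integral_nonneg_series integrable_on_mult_right has_integral_integrable[OF Beta])
       (auto simp: w_def a intro!: mult_nonneg_nonneg)
  then show ?thesis
    unfolding c[symmetric] integral_unique[OF Beta] .
qed

theorem theorem3:
  fixes M :: "'s measure" and T1 T2 :: "'s \<Rightarrow> 'a::euclidean_space" and \<nu> \<mu> :: real
  assumes "prob_space M" and "\<nu> > 0" and "\<mu> > 0"
    and "distributed M lborel T1 (\<lambda>t. ennreal (student_density \<nu> t))"
    and "distributed M lborel T2 (\<lambda>t. ennreal (student_density \<mu> t))"
    and "prob_space.indep_var M borel T1 borel T2"
  shows "distributed M lborel (\<lambda>\<omega>. T1 \<omega> + T2 \<omega>)
           (\<lambda>x. ennreal (\<Sum>n. c_coeff \<nu> \<mu> DIM('a) n * phi_density n (\<nu> + \<mu>) x))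
         \<and> (\<forall>n. c_coeff \<nu> \<mu> DIM('a) n > 0)
         \<and> (\<lambda>n. c_coeff \<nu> \<mu> DIM('a) n) sums 1"
proof (intro conjI allI)
  show "distributed M lborel (\<lambda>\<omega>. T1 \<omega> + T2 \<omega>)
      (\<lambda>x. ennreal (\<Sum>n. c_coeff \<nu> \<mu> DIM('a) n * phi_density n (\<nu> + \<mu>) x))"
    using prob_space.distributed_add_euclidean[OF assms(1,6,4,5)]
    by (simp add: nn_integral_student_convolution_series[OF assms(2,3)])
  show "c_coeff \<nu> \<mu> DIM('a) n > 0" for n
    using assms(2,3) by (rule c_coeff_pos) simp
  show "(\<lambda>n. c_coeff \<nu> \<mu> DIM('a) n) sums 1"
    using assms(2,3) by (rule c_coeff_sums_one) simp
qed

end
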